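(* Let $\pi$ be a stationary deterministic memoryless policy, $\hat q:\mathcal{S}\times\mathcal{A}\to\mathbb{R}$ any function, $\omega>0$ and $\mathcal{S}_{\text{fix}}\subseteq\mathcal{S}$. Let $\pi'=\pi_{\hat q,\pi,\mathcal{S}_{\text{fix}}}$ be the CAPI update. Assume that $|\hat q(s,a)-q^\pi(s,a)|\le\omega$ for all $s\in\mathcal{S}\setminus\mathcal{S}_{\text{fix}}$ and all $a\in\mathcal{A}$. Then $v^{\pi'}(s)\ge v^\pi(s)$ for every $s\in\mathcal{S}$.
   Context: An MDP is $M=(\mathcal{S},\mathcal{A},\mathcal{Q})$ with measurable state space $\mathcal{S}$, finite action set $\mathcal{A}=(\mathcal{A}_1,\dots,\mathcal{A}_{|\mathcal{A}|})$ (with a fixed ordering), and transition-reward kernel $\mathcal{Q}:\mathcal{S}\times\mathcal{A}\to\mathcal{M}_1(\mathcal{S}\times[0,1])$ with marginals $P(\cdot|s,a)$ (next state) and $\mathcal{R}(\cdot|s,a)$ (reward), $r(s,a)$ the mean reward; discount factor $\gamma\in(0,1)$. For a stationary memoryless policy $\pi$, $v^\pi(s)=\mathbb{E}_{\pi,s}[\sum_{t\ge0}\gamma^tR_t]$ and $q^\pi(s,a)=\mathbb{E}_{\pi,s,a}[\sum_{t\ge0}\gamma^tR_t]$ (trajectory started at $s$, resp. with first action $a$, then following $\pi$). For a deterministic policy, $\pi(s)$ denotes the chosen action. CAPI update: given $\hat q$, a deterministic policy $\pi$, $\omega>0$ and $\mathcal{S}_{\text{fix}}\subseteq\mathcal{S}$,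 the deterministic policy $\pi_{\hat q,\pi,\mathcal{S}_{\text{fix}}}$ is defined by $\pi_{\hat q,\pi,\mathcal{S}_{\text{fix}}}(s)=\arg\max_{a\in\mathcal{A}}\hat q(s,a)$ if $s\notin\mathcal{S}_{\text{fix}}$ and $\hat q(s,\pi(s))+\omega<\max_{a}\hat q(s,a)-\omega$, and $=\pi(s)$ otherwise; the argmax breaks ties by choosing the action $\mathcal{A}_i$ with the smallest index $i$. *)

theory Defs
  imports "HOL-Probability.Probability"
begin

(* Actions: a finite type 'b whose
   linear order is the fixed ordering A_1 < ... < A_|A|.
   The transition-reward kernel Q s a is a probability measure on S x [0,1]
   (realised as a probability measure on S \<Otimes> borel concentrated on space S x {0..1}). *)

definition mdp :: "'s measure \<Rightarrow> ('s \<Rightarrow> 'b \<Rightarrow> ('s \<times> real) measure) \<Rightarrow> bool" where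
  "mdp S Q \<longleftrightarrow>
     (\<forall>a. (\<lambda>s. Q s a) \<in> S \<rightarrow>\<^sub>M prob_algebra (S \<Otimes>\<^sub>M borel)) \<and>
     (\<forall>s\<in>space S. \<forall>a. emeasure (Q s a) (space S \<times> {0..1}) = 1)"

(* Law of (S_n, sum_{t<n} gamma^t R_t) along a trajectory started in s, where the action
   taken at time t in state x is act t x. *)
fun traj :: "'s measure \<Rightarrow> ('s \<Rightarrow> 'b \<Rightarrow> ('s \<times> real) measure) \<Rightarrow> real
      \<Rightarrow> (nat \<Rightarrow> 's \<Rightarrow> 'b) \<Rightarrow> 's \<Rightarrow> nat \<Rightarrow> ('s \<times> real) measure" where
  "traj S Q \<gamma> act s 0 = return (S \<Otimes>\<^sub>M borel) (s, 0)"
| "traj S Q \<gamma> act s (Suc n) =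
     Giry_Monad.bind (traj S Q \<gamma> act s n)
       (\<lambda>(x, g). distr (Q x (act n x)) (S \<Otimes>\<^sub>M borel) (\<lambda>(x', r). (x', g + \<gamma> ^ n * r)))"

definition vfun :: "'s measure \<Rightarrow> ('s \<Rightarrow> 'b \<Rightarrow> ('s \<times> real) measure) \<Rightarrow> real
      \<Rightarrow> ('s \<Rightarrow> 'b) \<Rightarrow> 's \<Rightarrow> real" where
  "vfun S Q \<gamma> \<pi> s = lim (\<lambda>n. \<integral>z. snd z \<partial>(traj S Q \<gamma> (\<lambda>t x. \<pi> x) s n))"

definition qfun :: "'s measure \<Rightarrow> ('s \<Rightarrow> 'b \<Rightarrow> ('s \<times> real) measure) \<Rightarrow> real
      \<Rightarrow> ('s \<Rightarrow> 'b) \<Rightarrow> 's \<Rightarrow> 'b \<Rightarrow> real" where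
  "qfun S Q \<gamma> \<pi> s a =
     lim (\<lambda>n. \<integral>z. snd z \<partial>(traj S Q \<gamma> (\<lambda>t x. if t = 0 then a else \<pi> x) s n))"

definition greedy :: "('s \<Rightarrow> 'b::{finite,linorder} \<Rightarrow> real) \<Rightarrow> 's \<Rightarrow> 'b" where
  "greedy qh s = (LEAST a. \<forall>b. qh s b \<le> qh s a)"

definition capi :: "('s \<Rightarrow> 'b::{finite,linorder} \<Rightarrow> real) \<Rightarrow> ('s \<Rightarrow> 'b) \<Rightarrow> real \<Rightarrow> 's set \<Rightarrow> 's \<Rightarrow> 'b" where
  "capi qh \<pi> \<omega> Sfix s =
     (if s \<notin> Sfix \<and> qh s (\<pi> s) + \<omega> < Max (range (qh s)) - \<omega> then greedy qh s else \<pi> s)"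

end

theory Submission
  imports Defs
begin

(* Unrolling a trajectory from its last step shows that the expected n-step return of a
   stationary policy p is T_p^n 0, where T_p h x = r(x, p x) + gamma * E[h(x') | x, p x] is the
   Bellman operator of p. Hence v^p = lim T_p^n 0 is a fixed point of T_p, and
   q^p(x, a) = r(x, a) + gamma * E[v^p(x') | x, a].
   CAPI only leaves pi(x) for the greedy action a when qh(x, a) - omega > qh(x, pi x) + omega,
   so the accuracy of qh gives q^pi(x, pi' x) >= q^pi(x, pi x) = v^pi(x), i.e. v^pi <= T_pi' v^pi.
   By monotonicity v^pi <= T_pi'^n v^pi, and since T_pi' is a gamma-contraction
   T_pi'^n v^pi - T_pi'^n 0 = O(gamma^n), whence v^pi <= v^pi'. *)

lemma integral_bind_AE_bounded:
  fixes f :: "_ \<Rightarrow> real"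
  assumes f[measurable]: "f \<in> borel_measurable K"
    and N[measurable]: "N \<in> M \<rightarrow>\<^sub>M subprob_algebra K"
    and M: "prob_space M"
    and bound: "AE y in M \<bind> N. \<bar>f y\<bar> \<le> B"
  shows "integral\<^sup>L (M \<bind> N) f = (\<integral>x. integral\<^sup>L (N x) f \<partial>M)"
proof -
  define clip where "clip y = max (-B) (min B y)" for y :: real
  have clip_abs_le: "\<bar>clip y\<bar> \<le> \<bar>B\<bar>" for y
    by (simp add: clip_def max_def min_def abs_if)
  have clip_id: "\<bar>y\<bar> \<le> B \<Longrightarrow> clip y = y" for y
    by (simp add: clip_def max_def min_def abs_le_iff)
  have [measurable]: "(\<lambda>y. clip (f y)) \<in> borel_measurable K"
    unfolding clip_def by measurable
  have sets_bind_K: "sets (M \<bind> N) = sets K"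
    using sets_bind[OF sets_kernel[OF N] prob_space.not_empty[OF M]] .
  have AE_inner: "AE x in M. AE y in N x. \<bar>f y\<bar> \<le> B"
    using bound by (subst (asm) AE_bind[OF N]) measurable
  have "integral\<^sup>L (M \<bind> N) f = integral\<^sup>L (M \<bind> N) (\<lambda>y. clip (f y))"
    using bound
    by (intro integral_cong_AE) (auto simp: clip_id cong: measurable_cong_sets[OF sets_bind_K])
  also have "\<dots> = (\<integral>x. integral\<^sup>L (N x) (\<lambda>y. clip (f y)) \<partial>M)"
    using subprob_space.subprob_emeasure_le_1[OF subprob_space_kernel[OF N]] M
    by (intro integral_bind[where K=K and B="\<bar>B\<bar>" and B'=1] clip_abs_le) (auto simp: prob_space_def)
  also have "\<dots> = (\<integral>x. integral\<^sup>L (N x) f \<partial>M)"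
  proof (rule integral_cong_AE)
    show "AE x in M. integral\<^sup>L (N x) (\<lambda>y. clip (f y)) = integral\<^sup>L (N x) f"
      using AE_inner AE_space
    proof eventually_elim
      case (elim x)
      then show ?case
        by (intro integral_cong_AE)
           (auto simp: clip_id cong: measurable_cong_sets[OF sets_kernel[OF N elim(2)]])
    qed
  qed simp_all
  finally show ?thesis .
qed

locale discounted_mdp =
  fixes S :: "'s measure" and Q :: "'s \<Rightarrow> 'b::countable \<Rightarrow> ('s \<times> real) measure" and \<gamma> :: real
  assumes mdp: "mdp S Q" and discount_pos: "0 < \<gamma>" and discount_less_1: "\<gamma> < 1"
begin

lemma kernel_measurable: "(\<lambda>x. Q x b) \<in> S \<rightarrow>\<^sub>M prob_algebra (S \<Otimes>\<^sub>M borel)"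
  using mdp unfolding mdp_def by auto

lemma kernel_policy_measurable:
  "p \<in> S \<rightarrow>\<^sub>M count_space UNIV \<Longrightarrow> (\<lambda>x. Q x (p x)) \<in> S \<rightarrow>\<^sub>M prob_algebra (S \<Otimes>\<^sub>M borel)"
  by (rule measurable_compose_countable[where f="\<lambda>b x. Q x b", OF kernel_measurable])

lemma prob_space_Q: "x \<in> space S \<Longrightarrow> prob_space (Q x b)"
  and sets_Q: "x \<in> space S \<Longrightarrow> sets (Q x b) = sets (S \<Otimes>\<^sub>M borel)"
  using measurable_space[OF kernel_measurable, of x b] by (auto simp: space_prob_algebra)

lemma AE_QI:
  assumes x: "x \<in> space S" and P: "\<And>z. fst z \<in> space S \<Longrightarrow> 0 \<le> snd z \<Longrightarrow> snd z \<le> 1 \<Longrightarrow> P z"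
  shows "AE z in Q x b. P z"
proof -
  interpret prob_space "Q x b" using prob_space_Q[OF x] .
  have support: "space S \<times> {0..1} \<in> sets (Q x b)" using sets_Q[OF x] by auto
  have "emeasure (Q x b) (space S \<times> {0..1}) = 1" using mdp x unfolding mdp_def by auto
  then have "AE z in Q x b. z \<in> space S \<times> {0..1}"
    using support by (intro AE_prob_1) (simp add: emeasure_eq_measure)
  then show ?thesis by eventually_elim (auto intro: P)
qed

lemma integrable_Q:
  assumes x: "x \<in> space S" and f: "f \<in> borel_measurable (S \<Otimes>\<^sub>M borel)"
    and bound: "AE z in Q x b. \<bar>f z\<bar> \<le> B"
  shows "integrable (Q x b) (f :: _ \<Rightarrow> real)"
proof -
  interpret prob_space "Q x b" using prob_space_Q[OF x] .
  show ?thesis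
    using bound f
    by (intro integrable_const_bound[where B=B]) (auto cong: measurable_cong_sets[OF sets_Q[OF x]])
qed

definition reward :: "'s \<Rightarrow> 'b \<Rightarrow> real" where
  "reward x b = (\<integral>z. snd z \<partial>Q x b)"

definition expect_next :: "('s \<Rightarrow> real) \<Rightarrow> 's \<Rightarrow> 'b \<Rightarrow> real" where
  "expect_next h x b = (\<integral>z. h (fst z) \<partial>Q x b)"

definition bounded_measurable :: "('s \<Rightarrow> real) \<Rightarrow> bool" where
  "bounded_measurable h \<longleftrightarrow> h \<in> borel_measurable S \<and> (\<exists>C. \<forall>x\<in>space S. \<bar>h x\<bar> \<le> C)"

lemma bounded_measurable_const: "bounded_measurable (\<lambda>_. c)"
  unfolding bounded_measurable_def by auto

lemma reward_nonneg: "x \<in> space S \<Longrightarrow> 0 \<le> reward x b"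
  unfolding reward_def by (intro integral_nonneg_AE AE_QI) auto

lemma reward_abs_le_1:
  assumes x: "x \<in> space S"
  shows "\<bar>reward x b\<bar> \<le> 1"
proof -
  interpret prob_space "Q x b" using prob_space_Q[OF x] .
  have "integrable (Q x b) snd" by (intro integrable_Q[OF x, where B=1] AE_QI[OF x]) auto
  then have "reward x b \<le> (\<integral>z. 1 \<partial>Q x b)"
    unfolding reward_def by (intro integral_mono_AE AE_QI[OF x]) auto
  then show ?thesis using reward_nonneg[OF x] by (simp add: prob_space)
qed

lemma integrable_next: "bounded_measurable h \<Longrightarrow> x \<in> space S \<Longrightarrow> integrable (Q x b) (\<lambda>z. h (fst z))"
  unfolding bounded_measurable_def by (elim conjE exE, intro integrable_Q AE_QI) auto

lemma expect_next_abs_le: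
  assumes h: "h \<in> borel_measurable S" and bound: "\<And>y. y \<in> space S \<Longrightarrow> \<bar>h y\<bar> \<le> C" and x: "x \<in> space S"
  shows "\<bar>expect_next h x b\<bar> \<le> C"
proof -
  interpret prob_space "Q x b" using prob_space_Q[OF x] .
  have "bounded_measurable h" using h bound unfolding bounded_measurable_def by blast
  have "\<bar>expect_next h x b\<bar> \<le> (\<integral>z. \<bar>h (fst z)\<bar> \<partial>Q x b)"
    unfolding expect_next_def by (rule integral_abs_bound)
  also have "\<dots> \<le> (\<integral>z. C \<partial>Q x b)"
    using integrable_next[OF \<open>bounded_measurable h\<close> x] bound
    by (intro integral_mono_AE AE_QI[OF x]) auto
  finally show ?thesis by (simp add: prob_space)
qed

lemma expect_next_mono:
  "bounded_measurable f \<Longrightarrow> bounded_measurable g \<Longrightarrow> (\<And>y. y \<in> space S \<Longrightarrow> f y \<le> g y) \<Longrightarrow>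
    x \<in> space S \<Longrightarrow> expect_next f x b \<le> expect_next g x b"
  unfolding expect_next_def by (intro integral_mono_AE AE_QI integrable_next)

lemma expect_next_diff:
  "bounded_measurable f \<Longrightarrow> bounded_measurable g \<Longrightarrow> x \<in> space S \<Longrightarrow>
    expect_next f x b - expect_next g x b = expect_next (\<lambda>y. f y - g y) x b"
  unfolding expect_next_def by (intro Bochner_Integration.integral_diff[symmetric] integrable_next)

lemma expect_next_cmult: "expect_next (\<lambda>y. c * h y) x b = c * expect_next h x b"
  unfolding expect_next_def by simp

lemma borel_measurable_reward:
  "p \<in> S \<rightarrow>\<^sub>M count_space UNIV \<Longrightarrow> (\<lambda>x. reward x (p x)) \<in> borel_measurable S"
  unfolding reward_def
  by (rule measurable_compose[OF kernel_policy_measurable[THEN measurable_prob_algebraD]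
        integral_measurable_subprob_algebra]) auto

lemma borel_measurable_expect_next:
  "h \<in> borel_measurable S \<Longrightarrow> p \<in> S \<rightarrow>\<^sub>M count_space UNIV \<Longrightarrow>
    (\<lambda>x. expect_next h x (p x)) \<in> borel_measurable S"
  unfolding expect_next_def
  by (rule measurable_compose[OF kernel_policy_measurable[THEN measurable_prob_algebraD]
        integral_measurable_subprob_algebra]) auto

lemma bounded_measurable_reward_next:
  assumes p: "p \<in> S \<rightarrow>\<^sub>M count_space UNIV" and h: "bounded_measurable h"
  shows "bounded_measurable (\<lambda>x. c * reward x (p x) + d * expect_next h x (p x))"
proof -
  obtain C where hm: "h \<in> borel_measurable S" and C: "\<And>y. y \<in> space S \<Longrightarrow> \<bar>h y\<bar> \<le> C"
    using h unfolding bounded_measurable_def by blast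
  have "\<bar>c * reward x (p x) + d * expect_next h x (p x)\<bar> \<le> \<bar>c\<bar> + \<bar>d\<bar> * C" if x: "x \<in> space S" for x
  proof -
    have "\<bar>c * reward x (p x)\<bar> \<le> \<bar>c\<bar>"
      using reward_abs_le_1[OF x] by (simp add: abs_mult mult_left_le)
    moreover have "\<bar>d * expect_next h x (p x)\<bar> \<le> \<bar>d\<bar> * C"
      using expect_next_abs_le[OF hm C x] by (simp add: abs_mult mult_left_mono)
    ultimately show ?thesis by linarith
  qed
  moreover have "(\<lambda>x. c * reward x (p x) + d * expect_next h x (p x)) \<in> borel_measurable S"
    using borel_measurable_reward[OF p] borel_measurable_expect_next[OF hm p] by measurable
  ultimately show ?thesis unfolding bounded_measurable_def by blast
qed

section \<open>Trajectories\<close>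

definition traj_step :: "(nat \<Rightarrow> 's \<Rightarrow> 'b) \<Rightarrow> nat \<Rightarrow> 's \<times> real \<Rightarrow> ('s \<times> real) measure" where
  "traj_step act n = (\<lambda>(x, g). distr (Q x (act n x)) (S \<Otimes>\<^sub>M borel) (\<lambda>(x', r). (x', g + \<gamma> ^ n * r)))"

lemma traj_Suc: "traj S Q \<gamma> act s (Suc n) = traj S Q \<gamma> act s n \<bind> traj_step act n"
  by (simp add: traj_step_def)

declare traj.simps(2)[simp del]

lemma measurable_shift_return:
  assumes x: "x \<in> space S"
  shows "(\<lambda>(x', r). (x', g + c * r)) \<in> Q x b \<rightarrow>\<^sub>M S \<Otimes>\<^sub>M borel"
  by (subst measurable_cong_sets[OF sets_Q[OF x] refl]) measurable

lemma integral_traj_step: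
  assumes x: "x \<in> space S" and h: "bounded_measurable h"
  shows "(\<integral>z. snd z + h (fst z) \<partial>traj_step act n (x, g))
    = g + \<gamma> ^ n * reward x (act n x) + expect_next h x (act n x)"
proof -
  let ?b = "act n x"
  interpret prob_space "Q x ?b" using prob_space_Q[OF x] .
  have [measurable]: "h \<in> borel_measurable S" using h unfolding bounded_measurable_def by blast
  have snd_int: "integrable (Q x ?b) snd" by (intro integrable_Q[OF x, where B=1] AE_QI[OF x]) auto
  have "(\<integral>z. snd z + h (fst z) \<partial>traj_step act n (x, g))
      = (\<integral>z. (g + \<gamma> ^ n * snd z) + h (fst z) \<partial>Q x ?b)"
    unfolding traj_step_def prod.case
    by (subst integral_distr[OF measurable_shift_return[OF x]])
       (measurable, simp add: split_beta' add_ac)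
  also have "\<dots> = (\<integral>z. g + \<gamma> ^ n * snd z \<partial>Q x ?b) + (\<integral>z. h (fst z) \<partial>Q x ?b)"
    using snd_int integrable_next[OF h x] by (intro Bochner_Integration.integral_add) auto
  also have "(\<integral>z. g + \<gamma> ^ n * snd z \<partial>Q x ?b) = g + \<gamma> ^ n * reward x ?b"
    using snd_int by (subst Bochner_Integration.integral_add) (auto simp: reward_def prob_space)
  finally show ?thesis by (simp add: expect_next_def)
qed

text \<open>The expected value of \<open>\<Sum>t<n. \<gamma>^t R\<^sub>t + h S\<^sub>n\<close>, computed by backward induction
  from the last step.\<close>

fun expected_return :: "(nat \<Rightarrow> 's \<Rightarrow> 'b) \<Rightarrow> nat \<Rightarrow> ('s \<Rightarrow> real) \<Rightarrow> 's \<Rightarrow> real" where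
  "expected_return act 0 h = h"
| "expected_return act (Suc n) h =
     expected_return act n (\<lambda>x. \<gamma> ^ n * reward x (act n x) + expect_next h x (act n x))"

context
  fixes act :: "nat \<Rightarrow> 's \<Rightarrow> 'b" and s :: 's
  assumes act_measurable: "\<And>t. act t \<in> S \<rightarrow>\<^sub>M count_space UNIV" and s: "s \<in> space S"
begin

lemma traj_step_measurable: "traj_step act n \<in> S \<Otimes>\<^sub>M borel \<rightarrow>\<^sub>M prob_algebra (S \<Otimes>\<^sub>M borel)"
proof -
  have [measurable]: "(\<lambda>y. Q (fst y) (act n (fst y))) \<in> S \<Otimes>\<^sub>M borel \<rightarrow>\<^sub>M prob_algebra (S \<Otimes>\<^sub>M borel)"
    by (rule measurable_compose[OF measurable_fst kernel_policy_measurable[OF act_measurable]])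
  have "(\<lambda>y. distr (Q (fst y) (act n (fst y))) (S \<Otimes>\<^sub>M borel) (\<lambda>(x', r). (x', snd y + \<gamma> ^ n * r)))
     \<in> S \<Otimes>\<^sub>M borel \<rightarrow>\<^sub>M prob_algebra (S \<Otimes>\<^sub>M borel)"
    by measurable
  then show ?thesis by (simp add: traj_step_def split_beta')
qed

lemma traj_prob_algebra: "traj S Q \<gamma> act s n \<in> space (prob_algebra (S \<Otimes>\<^sub>M borel))"
proof (induction n)
  case 0
  show ?case
    using s by (simp add: measurable_space[OF measurable_return_prob_space] space_pair_measure)
next
  case (Suc n)
  show ?case
    unfolding traj_Suc
    using prob_space_bind'[OF Suc traj_step_measurable] sets_bind'[OF Suc traj_step_measurable]
    by (simp add: space_prob_algebra)
qed

lemma prob_space_traj: "prob_space (traj S Q \<gamma> act s n)"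
  and sets_traj: "sets (traj S Q \<gamma> act s n) = sets (S \<Otimes>\<^sub>M borel)"
  using traj_prob_algebra by (auto simp: space_prob_algebra)

lemma space_traj: "space (traj S Q \<gamma> act s n) = space S \<times> UNIV"
  using sets_eq_imp_space_eq[OF sets_traj] by (simp add: space_pair_measure)

lemma traj_step_kernel: "traj_step act n \<in> traj S Q \<gamma> act s n \<rightarrow>\<^sub>M subprob_algebra (S \<Otimes>\<^sub>M borel)"
  using measurable_prob_algebraD[OF traj_step_measurable]
  by (simp cong: measurable_cong_sets[OF sets_traj])

lemma AE_traj_abs_le: "AE z in traj S Q \<gamma> act s n. \<bar>snd z\<bar> \<le> real n"
proof (induction n)
  case 0
  show ?case using s by (subst traj.simps(1), subst AE_return) (auto simp: space_pair_measure)
next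
  case (Suc n)
  have discount_le_1: "0 \<le> \<gamma> ^ n" "\<gamma> ^ n \<le> 1"
    using discount_pos discount_less_1 by (auto intro: power_le_one)
  have "AE y in traj S Q \<gamma> act s n. AE z in traj_step act n y. \<bar>snd z\<bar> \<le> real (Suc n)"
    using Suc AE_space
  proof eventually_elim
    case (elim y)
    obtain x g where y: "y = (x, g)" by fastforce
    have x: "x \<in> space S" using elim(2) space_traj y by simp
    have "AE z in Q x (act n x). \<bar>g + \<gamma> ^ n * snd z\<bar> \<le> real (Suc n)"
    proof (rule AE_QI[OF x])
      fix z :: "'s \<times> real" assume "0 \<le> snd z" "snd z \<le> 1"
      then have "0 \<le> \<gamma> ^ n * snd z" "\<gamma> ^ n * snd z \<le> 1"
        using discount_le_1 by (auto intro: mult_le_one)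
      then show "\<bar>g + \<gamma> ^ n * snd z\<bar> \<le> real (Suc n)" using elim(1) y by simp
    qed
    then show ?case
      unfolding y traj_step_def prod.case
      by (subst AE_distr_iff[OF measurable_shift_return[OF x]]) (simp_all add: split_beta')
  qed
  moreover have "Measurable.pred (S \<Otimes>\<^sub>M borel) (\<lambda>z. \<bar>snd z\<bar> \<le> real (Suc n))"
    by measurable
  ultimately show ?case unfolding traj_Suc by (subst AE_bind[OF traj_step_kernel])
qed

lemma integral_traj:
  "bounded_measurable h \<Longrightarrow>
    (\<integral>z. snd z + h (fst z) \<partial>traj S Q \<gamma> act s n) = expected_return act n h s"
proof (induction n arbitrary: h)
  case 0
  then have [measurable]: "h \<in> borel_measurable S" unfolding bounded_measurable_def by blast
  show ?case using s by (simp add: integral_return space_pair_measure)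
next
  case (Suc n)
  obtain C where [measurable]: "h \<in> borel_measurable S" and C: "\<And>x. x \<in> space S \<Longrightarrow> \<bar>h x\<bar> \<le> C"
    using Suc.prems unfolding bounded_measurable_def by blast
  define h' where "h' x = \<gamma> ^ n * reward x (act n x) + expect_next h x (act n x)" for x
  have h': "bounded_measurable h'"
    using bounded_measurable_reward_next[OF act_measurable Suc.prems, where c="\<gamma> ^ n" and d=1]
    by (simp add: h'_def[abs_def])
  have "AE z in traj S Q \<gamma> act s (Suc n). \<bar>snd z + h (fst z)\<bar> \<le> real (Suc n) + C"
    using AE_traj_abs_le[of "Suc n"] AE_space
  proof eventually_elim
    case (elim z)
    then have "\<bar>h (fst z)\<bar> \<le> C" using C space_traj by auto
    then show ?case using elim(1) abs_triangle_ineq[of "snd z" "h (fst z)"] by linarith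
  qed
  then have "(\<integral>z. snd z + h (fst z) \<partial>traj S Q \<gamma> act s (Suc n))
      = (\<integral>y. (\<integral>z. snd z + h (fst z) \<partial>traj_step act n y) \<partial>traj S Q \<gamma> act s n)"
    unfolding traj_Suc
    by (intro integral_bind_AE_bounded[OF _ traj_step_kernel prob_space_traj]) auto
  also have "\<dots> = (\<integral>y. snd y + h' (fst y) \<partial>traj S Q \<gamma> act s n)"
  proof (rule Bochner_Integration.integral_cong[OF refl])
    fix y assume "y \<in> space (traj S Q \<gamma> act s n)"
    moreover obtain x g where "y = (x, g)" by fastforce
    ultimately show "(\<integral>z. snd z + h (fst z) \<partial>traj_step act n y) = snd y + h' (fst y)"
      using integral_traj_step[OF _ Suc.prems] space_traj by (auto simp: h'_def)
  qed
  also have "\<dots> = expected_return act (Suc n) h s"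
    using Suc.IH[OF h'] by (simp add: h'_def[abs_def])
  finally show ?case .
qed

end

definition bellman_op :: "('s \<Rightarrow> 'b) \<Rightarrow> ('s \<Rightarrow> real) \<Rightarrow> 's \<Rightarrow> real" where
  "bellman_op p h x = reward x (p x) + \<gamma> * expect_next h x (p x)"

lemma expected_return_stationary:
  assumes "\<And>t. 0 < t \<Longrightarrow> act t = p"
  shows "expected_return act (Suc n) (\<lambda>x. \<gamma> ^ Suc n * h x)
    = bellman_op (act 0) ((bellman_op p ^^ n) h)"
  using assms
proof (induction n arbitrary: h)
  case 0
  show ?case by (simp add: bellman_op_def expect_next_cmult fun_eq_iff)
next
  case (Suc n)
  have "(\<lambda>x. \<gamma> ^ Suc n * reward x (act (Suc n) x)
          + expect_next (\<lambda>x. \<gamma> ^ Suc (Suc n) * h x) x (act (Suc n) x))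
      = (\<lambda>x. \<gamma> ^ Suc n * bellman_op p h x)"
    using Suc.prems by (simp only: bellman_op_def expect_next_cmult) (simp add: algebra_simps)
  then have "expected_return act (Suc (Suc n)) (\<lambda>x. \<gamma> ^ Suc (Suc n) * h x)
      = expected_return act (Suc n) (\<lambda>x. \<gamma> ^ Suc n * bellman_op p h x)"
    by (simp only: expected_return.simps)
  also have "\<dots> = bellman_op (act 0) ((bellman_op p ^^ n) (bellman_op p h))"
    by (rule Suc.IH[OF Suc.prems])
  finally show ?case by (simp add: funpow_Suc_right del: funpow.simps)
qed

lemma integral_traj_stationary:
  assumes s: "s \<in> space S" and act: "\<And>t. act t \<in> S \<rightarrow>\<^sub>M count_space UNIV"
    and stationary: "\<And>t. 0 < t \<Longrightarrow> act t = p"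
  shows "(\<integral>z. snd z \<partial>traj S Q \<gamma> act s (Suc n)) = bellman_op (act 0) ((bellman_op p ^^ n) (\<lambda>_. 0)) s"
proof -
  have "(\<integral>z. snd z \<partial>traj S Q \<gamma> act s (Suc n)) = expected_return act (Suc n) (\<lambda>_. 0) s"
    using integral_traj[OF _ s bounded_measurable_const[of 0], of act "Suc n"] act by simp
  also have "\<dots> = bellman_op (act 0) ((bellman_op p ^^ n) (\<lambda>_. 0)) s"
    using expected_return_stationary[where act=act and p=p and n=n and h="\<lambda>_. 0", OF stationary]
    by simp
  finally show ?thesis .
qed

section \<open>Value functions\<close>

context
  fixes p :: "'s \<Rightarrow> 'b"
  assumes p_measurable: "p \<in> S \<rightarrow>\<^sub>M count_space UNIV"
begin

lemma bellman_op_bounded: "bounded_measurable h \<Longrightarrow> bounded_measurable (bellman_op p h)"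
  using bounded_measurable_reward_next[OF p_measurable, of h 1 \<gamma>]
  by (simp add: bellman_op_def[abs_def])

lemma bellman_iter_bounded: "bounded_measurable h \<Longrightarrow> bounded_measurable ((bellman_op p ^^ n) h)"
  by (induction n) (auto intro: bellman_op_bounded)

lemma bellman_iter_Suc:
  "(bellman_op p ^^ Suc n) h x = reward x (p x) + \<gamma> * expect_next ((bellman_op p ^^ n) h) x (p x)"
  by (simp only: funpow.simps(2) comp_apply bellman_op_def)

lemma bellman_iter_mono:
  assumes f: "bounded_measurable f" and g: "bounded_measurable g"
    and le: "\<And>y. y \<in> space S \<Longrightarrow> f y \<le> g y"
  shows "x \<in> space S \<Longrightarrow> (bellman_op p ^^ n) f x \<le> (bellman_op p ^^ n) g x"
proof (induction n arbitrary: x)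
  case (Suc n)
  have "expect_next ((bellman_op p ^^ n) f) x (p x) \<le> expect_next ((bellman_op p ^^ n) g) x (p x)"
    by (rule expect_next_mono[OF bellman_iter_bounded[OF f] bellman_iter_bounded[OF g] Suc.IH Suc.prems])
  then show ?case
    unfolding bellman_iter_Suc using discount_pos by (simp add: mult_left_mono)
qed (use le in simp)

lemma bellman_iter_dist:
  assumes f: "bounded_measurable f" and g: "bounded_measurable g"
    and c: "\<And>y. y \<in> space S \<Longrightarrow> \<bar>f y - g y\<bar> \<le> c"
  shows "x \<in> space S \<Longrightarrow> \<bar>(bellman_op p ^^ n) f x - (bellman_op p ^^ n) g x\<bar> \<le> \<gamma> ^ n * c"
proof (induction n arbitrary: x)
  case (Suc n)
  let ?f = "(bellman_op p ^^ n) f" and ?g = "(bellman_op p ^^ n) g"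
  have "?f \<in> borel_measurable S" "?g \<in> borel_measurable S"
    using bellman_iter_bounded[OF f] bellman_iter_bounded[OF g]
    unfolding bounded_measurable_def by blast+
  then have "\<bar>expect_next (\<lambda>y. ?f y - ?g y) x (p x)\<bar> \<le> \<gamma> ^ n * c"
    using Suc by (intro expect_next_abs_le) auto
  then show ?case
    unfolding bellman_iter_Suc
    using expect_next_diff[OF bellman_iter_bounded[OF f] bellman_iter_bounded[OF g] Suc.prems]
      discount_pos
    by (simp add: abs_mult right_diff_distrib[symmetric] mult_left_mono)
qed (use c in simp)

lemma bellman_iter_zero_abs_le: "x \<in> space S \<Longrightarrow> \<bar>(bellman_op p ^^ n) (\<lambda>_. 0) x\<bar> \<le> 1 / (1 - \<gamma>)"
proof (induction n arbitrary: x)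
  case 0
  then show ?case using discount_less_1 by simp
next
  case (Suc n)
  have "(bellman_op p ^^ n) (\<lambda>_. 0) \<in> borel_measurable S"
    using bellman_iter_bounded[OF bounded_measurable_const]
    unfolding bounded_measurable_def by blast
  then have "\<bar>expect_next ((bellman_op p ^^ n) (\<lambda>_. 0)) x (p x)\<bar> \<le> 1 / (1 - \<gamma>)"
    using Suc by (intro expect_next_abs_le)
  then have "\<bar>\<gamma> * expect_next ((bellman_op p ^^ n) (\<lambda>_. 0)) x (p x)\<bar> \<le> \<gamma> * (1 / (1 - \<gamma>))"
    using discount_pos by (simp only: abs_mult abs_of_pos mult_left_mono)
  then have "\<bar>(bellman_op p ^^ Suc n) (\<lambda>_. 0) x\<bar> \<le> 1 + \<gamma> * (1 / (1 - \<gamma>))"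
    unfolding bellman_iter_Suc using reward_abs_le_1[OF Suc.prems, of "p x"] by linarith
  also have "\<dots> = 1 / (1 - \<gamma>)" using discount_less_1 by (simp add: field_simps)
  finally show ?case .
qed

lemma bellman_iter_zero_incseq:
  assumes x: "x \<in> space S"
  shows "incseq (\<lambda>n. (bellman_op p ^^ n) (\<lambda>_. 0) x)"
proof (rule incseq_SucI)
  fix n
  have "(bellman_op p ^^ n) (\<lambda>_. 0) x \<le> (bellman_op p ^^ n) (bellman_op p (\<lambda>_. 0)) x"
    using reward_nonneg
    by (intro bellman_iter_mono bellman_op_bounded bounded_measurable_const x)
       (simp add: bellman_op_def expect_next_def)
  then show "(bellman_op p ^^ n) (\<lambda>_. 0) x \<le> (bellman_op p ^^ Suc n) (\<lambda>_. 0) x"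
    by (simp only: funpow_Suc_right comp_apply)
qed

lemma bellman_iter_LIMSEQ_vfun:
  assumes x: "x \<in> space S"
  shows "(\<lambda>n. (bellman_op p ^^ n) (\<lambda>_. 0) x) \<longlonglongrightarrow> vfun S Q \<gamma> p x"
proof -
  have integral_eq: "(\<integral>z. snd z \<partial>traj S Q \<gamma> (\<lambda>t. p) x n) = (bellman_op p ^^ n) (\<lambda>_. 0) x" for n
  proof (cases n)
    case 0
    then show ?thesis using x by (simp add: integral_return space_pair_measure)
  next
    case (Suc m)
    then show ?thesis
      using integral_traj_stationary[where act="\<lambda>t. p" and p=p and n=m, OF x p_measurable] by simp
  qed
  obtain L where L: "(\<lambda>n. (bellman_op p ^^ n) (\<lambda>_. 0) x) \<longlonglongrightarrow> L"
    using incseq_convergent[OF bellman_iter_zero_incseq[OF x]] bellman_iter_zero_abs_le[OF x]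
    by (metis abs_le_D1)
  moreover have "vfun S Q \<gamma> p x = L"
    unfolding vfun_def integral_eq using L by (rule limI)
  ultimately show ?thesis by simp
qed

lemma bounded_measurable_vfun: "bounded_measurable (vfun S Q \<gamma> p)"
proof -
  have iter_measurable: "(bellman_op p ^^ n) (\<lambda>_. 0) \<in> borel_measurable S" for n
    using bellman_iter_bounded[OF bounded_measurable_const]
    unfolding bounded_measurable_def by blast
  have "vfun S Q \<gamma> p \<in> borel_measurable S"
  proof (rule borel_measurable_LIMSEQ_real)
    show "(\<lambda>n. (bellman_op p ^^ n) (\<lambda>_. 0) x) \<longlonglongrightarrow> vfun S Q \<gamma> p x" if "x \<in> space S" for x
      using that by (rule bellman_iter_LIMSEQ_vfun)
  qed (rule iter_measurable)
  moreover have "\<bar>vfun S Q \<gamma> p x\<bar> \<le> 1 / (1 - \<gamma>)" if "x \<in> space S" for x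
    by (rule LIMSEQ_le_const2[OF tendsto_rabs[OF bellman_iter_LIMSEQ_vfun[OF that]]])
       (use bellman_iter_zero_abs_le[OF that] in blast)
  ultimately show ?thesis unfolding bounded_measurable_def by blast
qed

lemma expect_next_LIMSEQ:
  assumes x: "x \<in> space S"
  shows "(\<lambda>n. expect_next ((bellman_op p ^^ n) (\<lambda>_. 0)) x b) \<longlonglongrightarrow> expect_next (vfun S Q \<gamma> p) x b"
proof -
  interpret prob_space "Q x b" using prob_space_Q[OF x] .
  have measurable_Q: "(\<lambda>z. h (fst z)) \<in> borel_measurable (Q x b)" if "bounded_measurable h" for h
    using that
    by (subst measurable_cong_sets[OF sets_Q[OF x] refl]) (auto simp: bounded_measurable_def)
  show ?thesis
    unfolding expect_next_def
  proof (rule integral_dominated_convergence[where w="\<lambda>_. 1 / (1 - \<gamma>)"])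
    show "(\<lambda>z. vfun S Q \<gamma> p (fst z)) \<in> borel_measurable (Q x b)"
      by (rule measurable_Q[OF bounded_measurable_vfun])
    show "(\<lambda>z. (bellman_op p ^^ n) (\<lambda>_. 0) (fst z)) \<in> borel_measurable (Q x b)" for n
      by (rule measurable_Q[OF bellman_iter_bounded[OF bounded_measurable_const]])
    show "AE z in Q x b. (\<lambda>n. (bellman_op p ^^ n) (\<lambda>_. 0) (fst z)) \<longlonglongrightarrow> vfun S Q \<gamma> p (fst z)"
      by (rule AE_QI[OF x]) (rule bellman_iter_LIMSEQ_vfun)
    show "AE z in Q x b. norm ((bellman_op p ^^ n) (\<lambda>_. 0) (fst z)) \<le> 1 / (1 - \<gamma>)" for n
      by (rule AE_QI[OF x]) (simp add: bellman_iter_zero_abs_le)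
  qed simp
qed

lemma bellman_op_LIMSEQ:
  "x \<in> space S \<Longrightarrow> (\<lambda>n. bellman_op b ((bellman_op p ^^ n) (\<lambda>_. 0)) x) \<longlonglongrightarrow> bellman_op b (vfun S Q \<gamma> p) x"
  unfolding bellman_op_def[of b] by (intro tendsto_intros expect_next_LIMSEQ)

lemma bellman_equation:
  assumes x: "x \<in> space S"
  shows "bellman_op p (vfun S Q \<gamma> p) x = vfun S Q \<gamma> p x"
proof -
  have "(\<lambda>n. (bellman_op p ^^ Suc n) (\<lambda>_. 0) x) \<longlonglongrightarrow> bellman_op p (vfun S Q \<gamma> p) x"
    using bellman_op_LIMSEQ[OF x, where b=p] by (simp only: funpow.simps(2) comp_apply)
  moreover have "(\<lambda>n. (bellman_op p ^^ Suc n) (\<lambda>_. 0) x) \<longlonglongrightarrow> vfun S Q \<gamma> p x"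
    using LIMSEQ_Suc[OF bellman_iter_LIMSEQ_vfun[OF x]] .
  ultimately show ?thesis by (rule LIMSEQ_unique)
qed

lemma qfun_eq_bellman_op:
  assumes x: "x \<in> space S"
  shows "qfun S Q \<gamma> p x a = bellman_op (\<lambda>_. a) (vfun S Q \<gamma> p) x"
proof -
  define act :: "nat \<Rightarrow> 's \<Rightarrow> 'b" where "act t = (if t = 0 then (\<lambda>_. a) else p)" for t
  have act_measurable: "act t \<in> S \<rightarrow>\<^sub>M count_space UNIV" for t
    using p_measurable by (simp add: act_def)
  have stationary: "act t = p" if "0 < t" for t
    using that by (simp add: act_def)
  have "(\<lambda>n. \<integral>z. snd z \<partial>traj S Q \<gamma> act x (Suc n)) \<longlonglongrightarrow> bellman_op (\<lambda>_. a) (vfun S Q \<gamma> p) x"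
    using bellman_op_LIMSEQ[OF x, where b="\<lambda>_. a"]
      integral_traj_stationary[where act=act and p=p, OF x act_measurable stationary]
    by (simp add: act_def)
  then have "(\<lambda>n. \<integral>z. snd z \<partial>traj S Q \<gamma> act x n) \<longlonglongrightarrow> bellman_op (\<lambda>_. a) (vfun S Q \<gamma> p) x"
    by (rule LIMSEQ_imp_Suc)
  moreover have "(\<lambda>t x. if t = 0 then a else p x) = act"
    by (simp add: act_def fun_eq_iff)
  ultimately show ?thesis
    unfolding qfun_def by (simp add: limI)
qed

end

lemma le_vfun_if_le_bellman_op:
  assumes p: "p \<in> S \<rightarrow>\<^sub>M count_space UNIV" and v: "bounded_measurable v"
    and sub: "\<And>x. x \<in> space S \<Longrightarrow> v x \<le> bellman_op p v x" and x: "x \<in> space S"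
  shows "v x \<le> vfun S Q \<gamma> p x"
proof -
  obtain C where C: "\<And>y. y \<in> space S \<Longrightarrow> \<bar>v y\<bar> \<le> C"
    using v unfolding bounded_measurable_def by auto
  have iter: "v y \<le> (bellman_op p ^^ n) v y" if "y \<in> space S" for y n
    using that
  proof (induction n arbitrary: y)
    case (Suc n)
    have "v y \<le> bellman_op p v y" by (rule sub[OF Suc.prems])
    also have "\<dots> \<le> bellman_op p ((bellman_op p ^^ n) v) y"
      using bellman_iter_mono[OF p v bellman_iter_bounded[OF p v] Suc.IH Suc.prems, where n=1]
      by simp
    finally show ?case by simp
  qed simp
  have dist: "\<bar>(bellman_op p ^^ n) v x - (bellman_op p ^^ n) (\<lambda>_. 0) x\<bar> \<le> \<gamma> ^ n * C" for n
    using C x by (intro bellman_iter_dist[OF p v bounded_measurable_const]) auto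
  have "v x \<le> (bellman_op p ^^ n) (\<lambda>_. 0) x + \<gamma> ^ n * C" for n
    using iter[OF x, of n] dist[of n] by (simp add: abs_le_iff)
  moreover have "(\<lambda>n. (bellman_op p ^^ n) (\<lambda>_. 0) x + \<gamma> ^ n * C) \<longlonglongrightarrow> vfun S Q \<gamma> p x + 0 * C"
    using discount_pos discount_less_1
    by (intro tendsto_intros bellman_iter_LIMSEQ_vfun[OF p x] LIMSEQ_power_zero) auto
  ultimately show ?thesis by (intro LIMSEQ_le_const) auto
qed

theorem policy_improvement:
  assumes p: "p \<in> S \<rightarrow>\<^sub>M count_space UNIV" and p': "p' \<in> S \<rightarrow>\<^sub>M count_space UNIV"
    and improves: "\<And>x. x \<in> space S \<Longrightarrow> qfun S Q \<gamma> p x (p x) \<le> qfun S Q \<gamma> p x (p' x)"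
    and x: "x \<in> space S"
  shows "vfun S Q \<gamma> p x \<le> vfun S Q \<gamma> p' x"
proof (rule le_vfun_if_le_bellman_op[OF p' bounded_measurable_vfun[OF p] _ x])
  fix y assume y: "y \<in> space S"
  have "vfun S Q \<gamma> p y = qfun S Q \<gamma> p y (p y)"
    using bellman_equation[OF p y] qfun_eq_bellman_op[OF p y] by (simp add: bellman_op_def)
  also have "\<dots> \<le> qfun S Q \<gamma> p y (p' y)" by (rule improves[OF y])
  also have "\<dots> = bellman_op p' (vfun S Q \<gamma> p) y"
    using qfun_eq_bellman_op[OF p y] by (simp add: bellman_op_def)
  finally show "vfun S Q \<gamma> p y \<le> bellman_op p' (vfun S Q \<gamma> p) y" .
qed

end

lemma greedy_ge:
  fixes qh :: "'s \<Rightarrow> 'b::{finite,linorder} \<Rightarrow> real"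
  shows "qh x b \<le> qh x (greedy qh x)"
proof -
  have ex: "\<exists>a. \<forall>b. qh x b \<le> qh x a"
    using Max_ge[of "range (qh x)"] Max_in[of "range (qh x)"] by fastforce
  have "greedy qh x = Min {a. \<forall>b. qh x b \<le> qh x a}"
    unfolding greedy_def by (rule Least_Min[OF _ ex]) simp
  also have "\<dots> \<in> {a. \<forall>b. qh x b \<le> qh x a}"
    using ex by (intro Min_in) auto
  finally show ?thesis by simp
qed

lemma capi_improves:
  fixes qh :: "'s \<Rightarrow> 'b::{finite,linorder} \<Rightarrow> real"
  assumes accurate: "\<And>a. x \<notin> Sfix \<Longrightarrow> \<bar>qh x a - q a\<bar> \<le> \<omega>"
  shows "q (\<pi> x) \<le> q (capi qh \<pi> \<omega> Sfix x)"
proof (cases "x \<notin> Sfix \<and> qh x (\<pi> x) + \<omega> < Max (range (qh x)) - \<omega>")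
  case True
  have "q (\<pi> x) \<le> qh x (\<pi> x) + \<omega>"
    using accurate[of "\<pi> x"] True by (simp add: abs_le_iff)
  also have "\<dots> < Max (range (qh x)) - \<omega>"
    using True by simp
  also have "\<dots> \<le> qh x (greedy qh x) - \<omega>"
    using greedy_ge[of qh x] by (simp add: Max_le_iff)
  also have "\<dots> \<le> q (greedy qh x)"
    using accurate[of "greedy qh x"] True by (simp add: abs_le_iff)
  finally show ?thesis
    using True by (simp add: capi_def)
qed (auto simp: capi_def)

theorem lemma3p1:
  fixes S :: "'s measure"
    and Q :: "'s \<Rightarrow> 'b::{finite,linorder} \<Rightarrow> ('s \<times> real) measure"
    and \<gamma> \<omega> :: real and \<pi> :: "'s \<Rightarrow> 'b" and qh :: "'s \<Rightarrow> 'b \<Rightarrow> real" and Sfix :: "'s set"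
  assumes "mdp S Q"
    and "0 < \<gamma>" and "\<gamma> < 1"
    and "\<pi> \<in> S \<rightarrow>\<^sub>M count_space UNIV"
    and "0 < \<omega>"
    and "Sfix \<subseteq> space S"
    and "capi qh \<pi> \<omega> Sfix \<in> S \<rightarrow>\<^sub>M count_space UNIV"
    and "\<forall>s\<in>space S - Sfix. \<forall>a. \<bar>qh s a - qfun S Q \<gamma> \<pi> s a\<bar> \<le> \<omega>"
  shows "\<forall>s\<in>space S. vfun S Q \<gamma> (capi qh \<pi> \<omega> Sfix) s \<ge> vfun S Q \<gamma> \<pi> s"
proof -
  interpret discounted_mdp S Q \<gamma> using assms(1-3) by unfold_locales
  have "qfun S Q \<gamma> \<pi> s (\<pi> s) \<le> qfun S Q \<gamma> \<pi> s (capi qh \<pi> \<omega> Sfix s)" if "s \<in> space S" for s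
    using assms(8) that by (intro capi_improves) blast
  then show ?thesis using policy_improvement[OF assms(4,7)] by blast
qed

end
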